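(* Let $T_{\mathfrak{so}_4} \in \mathfrak{so}_4^* \otimes \mathfrak{so}_4^* \otimes \mathfrak{so}_4$ be the structure tensor of the complex Lie algebra $\mathfrak{so}_4$. Then its border rank satisfies $\underline{\mathbf{R}}(T_{\mathfrak{so}_4}) \geq 9$.
   Context: $\mathfrak{so}_n$ denotes the complex Lie algebra of skew-symmetric $n\times n$ complex matrices with bracket $[x,y]=xy-yx$ (note $\mathfrak{so}_4\simeq\mathfrak{sl}_2\times\mathfrak{sl}_2$). For a Lie algebra $\mathfrak{g}$, its structure tensor $T_{\mathfrak{g}}\in\mathfrak{g}^*\otimes\mathfrak{g}^*\otimes\mathfrak{g}$ is the tensor corresponding to the bilinear map $(x,y)\mapsto[x,y]$; in a basis $\{a_i\}$ with dual basis $\{\alpha^i\}$ and $[a_i,a_j]=\sum_k A_{ij}^k a_k$, it is $\sum_{i,j,k}A_{ij}^k\,\alpha^i\otimes\alpha^j\otimes a_k$. For a tensor $T\in A\otimes B\otimes C$ over $\mathbb{C}$, the rank of $T$ is the minimal $r$ with $T=\sum_{i=1}^r a_i\otimes b_i\otimes c_i$, and the border rank $\underline{\mathbf{R}}(T)$ is the minimal $r$ such that $T=\lim_{\epsilon\to 0}T_\epsilon$ with each $T_\epsilon$ of rank at most $r$. *)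

theory Defs
  imports Complex_Main
begin

text \<open>Tensors in C^n (x) C^n (x) C^n are represented by their coordinate arrays
  nat => nat => nat => complex; only indices below n are relevant.\<close>

definition tensor_rank_le :: "nat \<Rightarrow> (nat \<Rightarrow> nat \<Rightarrow> nat \<Rightarrow> complex) \<Rightarrow> nat \<Rightarrow> bool" where
  "tensor_rank_le n T r \<longleftrightarrow>
     (\<exists>a b c :: nat \<Rightarrow> nat \<Rightarrow> complex. \<forall>i<n. \<forall>j<n. \<forall>k<n.
        T i j k = (\<Sum>l<r. a l i * b l j * c l k))"

definition border_rank_le :: "nat \<Rightarrow> (nat \<Rightarrow> nat \<Rightarrow> nat \<Rightarrow> complex) \<Rightarrow> nat \<Rightarrow> bool" where
  "border_rank_le n T r \<longleftrightarrow>
     (\<exists>Te :: real \<Rightarrow> nat \<Rightarrow> nat \<Rightarrow> nat \<Rightarrow> complex.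
        (\<forall>e. tensor_rank_le n (Te e) r) \<and>
        (\<forall>i<n. \<forall>j<n. \<forall>k<n. ((\<lambda>e. Te e i j k) \<longlongrightarrow> T i j k) (at 0)))"

definition border_rank :: "nat \<Rightarrow> (nat \<Rightarrow> nat \<Rightarrow> nat \<Rightarrow> complex) \<Rightarrow> nat" where
  "border_rank n T = (LEAST r. border_rank_le n T r)"

definition mat4_mult :: "(nat \<Rightarrow> nat \<Rightarrow> complex) \<Rightarrow> (nat \<Rightarrow> nat \<Rightarrow> complex) \<Rightarrow> nat \<Rightarrow> nat \<Rightarrow> complex" where
  "mat4_mult M N = (\<lambda>p q. \<Sum>l<4. M p l * N l q)"

definition mat4_bracket :: "(nat \<Rightarrow> nat \<Rightarrow> complex) \<Rightarrow> (nat \<Rightarrow> nat \<Rightarrow> complex) \<Rightarrow> nat \<Rightarrow> nat \<Rightarrow> complex" where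
  "mat4_bracket M N = (\<lambda>p q. mat4_mult M N p q - mat4_mult N M p q)"

definition so4_pair :: "nat \<Rightarrow> nat \<times> nat" where
  "so4_pair k = [(0,1),(0,2),(0,3),(1,2),(1,3),(2,3)] ! k"

definition so4_basis :: "nat \<Rightarrow> nat \<Rightarrow> nat \<Rightarrow> complex" where
  "so4_basis k = (\<lambda>p q. if (p, q) = so4_pair k then 1
                        else if (q, p) = so4_pair k then -1 else 0)"

definition so4_struct_const :: "nat \<Rightarrow> nat \<Rightarrow> nat \<Rightarrow> complex" where
  "so4_struct_const i j = (THE c. (\<forall>k\<ge>6. c k = 0) \<and>
      (\<forall>p<4. \<forall>q<4. mat4_bracket (so4_basis i) (so4_basis j) p q
                     = (\<Sum>k<6. c k * so4_basis k p q)))"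

definition T_so4 :: "nat \<Rightarrow> nat \<Rightarrow> nat \<Rightarrow> complex" where
  "T_so4 i j k = (if i < 6 \<and> j < 6 \<and> k < 6 then so4_struct_const i j k else 0)"

end

theory Submission
  imports Defs "Jordan_Normal_Form.Determinant"
begin

text \<open>The bound comes from a Koszul flattening (Landsberg--Ottaviani). Restricting the first factor
  of \<open>T \<in> A \<otimes> B \<otimes> C\<close> to a three-dimensional space with basis \<open>e\<^sub>0, e\<^sub>1, e\<^sub>2\<close>, write
  \<open>T = \<Sum>\<^sub>i e\<^sub>i \<otimes> T\<^sub>i\<close> and consider the linear map \<open>B\<^sup>* \<otimes> \<complex>\<^sup>3 \<rightarrow> C \<otimes> \<Lambda>\<^sup>2 \<complex>\<^sup>3\<close>,
  \<open>\<beta> \<otimes> v \<mapsto> \<Sum>\<^sub>i T\<^sub>i(\<beta>) \<otimes> (v \<and> e\<^sub>i)\<close>. For a rank-one tensor \<open>a \<otimes> b \<otimes> c\<close> this map is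
  \<open>(\<beta> \<mapsto> \<beta>(b) c) \<otimes> (v \<mapsto> v \<and> a)\<close>, of rank at most 2 because \<open>a \<and> a = 0\<close>. Hence the
  flattening of a tensor of rank \<open>r\<close> factors through dimension \<open>2 r\<close>, its determinant vanishes
  when \<open>2 r < 3 n\<close>, and by continuity of the determinant the same holds for border rank \<open>r\<close>.
  For \<open>T_so4\<close> (\<open>n = 6\<close>) the flattening along \<open>a\<^sub>5, a\<^sub>4, a\<^sub>3\<close> is an invertible
  \<open>18 \<times> 18\<close> matrix, so the border rank is at least 9.\<close>

lemma tensor_rank_le_square: "tensor_rank_le n T (n * n)"
  unfolding tensor_rank_le_def
proof (intro exI allI impI)
  fix i j k assume i: "i < n" and j: "j < n" and k: "k < n"
  have "(\<Sum>l<n * n. (if i = l div n then 1 else 0) * (if j = l mod n then 1 else 0) * T (l div n) (l mod n) k)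
      = (\<Sum>l<n * n. if l = i * n + j then T i j k else 0)"
  proof (rule sum.cong[OF refl])
    fix l
    have "(i = l div n \<and> j = l mod n) \<longleftrightarrow> l = i * n + j"
      using j div_mult_mod_eq[of l n] by auto
    then show "(if i = l div n then 1 else 0) * (if j = l mod n then 1 else 0) * T (l div n) (l mod n) k
        = (if l = i * n + j then T i j k else 0)"
      by auto
  qed
  also have "\<dots> = T i j k"
  proof -
    have "i * n + j < (i + 1) * n" using j by simp
    also have "\<dots> \<le> n * n" using i by (intro mult_right_mono) auto
    finally show ?thesis by simp
  qed
  finally show "T i j k = (\<Sum>l<n * n. (if i = l div n then 1 else 0) * (if j = l mod n then 1 else 0)
      * T (l div n) (l mod n) k)" ..
qed

lemma border_rank_le_if_tensor_rank_le: "tensor_rank_le n T r \<Longrightarrow> border_rank_le n T r"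
  unfolding border_rank_le_def by (intro exI[of _ "\<lambda>_. T"]) auto

lemma border_rank_le_border_rank: "border_rank_le n T (border_rank n T)"
  unfolding border_rank_def
  by (rule LeastI[of "border_rank_le n T", OF border_rank_le_if_tensor_rank_le[OF tensor_rank_le_square]])

lemma det_mult_eq_0_if_inner_dim_less:
  fixes U V :: "'a :: field mat"
  assumes U: "U \<in> carrier_mat n k" and V: "V \<in> carrier_mat k n" and "k < n"
  shows "det (U * V) = 0"
proof -
  define U' where "U' = mat n n (\<lambda>(i, j). if j < k then U $$ (i, j) else 0)"
  define V' where "V' = mat n n (\<lambda>(i, j). if i < k then V $$ (i, j) else 0)"
  have U'V': "U * V = U' * V'"
  proof (rule eq_matI)
    fix i j assume "i < dim_row (U' * V')" "j < dim_col (U' * V')"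
    then have "i < n" "j < n" by (simp_all add: U'_def V'_def)
    moreover have "{0..<n} = {0..<k} \<union> {k..<n}" using \<open>k < n\<close> by auto
    ultimately show "(U * V) $$ (i, j) = (U' * V') $$ (i, j)"
      using U V \<open>k < n\<close> by (auto simp: U'_def V'_def scalar_prod_def sum.union_disjoint intro!: sum.cong)
  qed (use U V in \<open>simp_all add: U'_def V'_def\<close>)
  have "U' *\<^sub>v unit_vec n (n - 1) = 0\<^sub>v n"
    using \<open>k < n\<close> by (intro eq_vecI) (auto simp: U'_def scalar_prod_def unit_vec_def intro!: sum.neutral)
  then have "det U' = 0"
    using \<open>k < n\<close> by (subst det_0_iff_vec_prod_zero_field[of _ n])
      (auto simp: U'_def intro!: exI[of _ "unit_vec n (n - 1)"])
  then show ?thesis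
    unfolding U'V' by (subst det_mult[of _ n]) (simp_all add: U'_def V'_def)
qed

lemma tendsto_det:
  fixes A :: "'b \<Rightarrow> 'a :: {real_normed_algebra, comm_ring_1} mat"
  assumes A: "\<And>x. A x \<in> carrier_mat n n" and B: "B \<in> carrier_mat n n"
    and lim: "\<And>i j. i < n \<Longrightarrow> j < n \<Longrightarrow> ((\<lambda>x. A x $$ (i, j)) \<longlongrightarrow> B $$ (i, j)) F"
  shows "((\<lambda>x. det (A x)) \<longlongrightarrow> det B) F"
proof -
  have "((\<lambda>x. \<Sum>p | p permutes {0..<n}. signof p * (\<Prod>i = 0..<n. A x $$ (i, p i)))
      \<longlongrightarrow> (\<Sum>p | p permutes {0..<n}. signof p * (\<Prod>i = 0..<n. B $$ (i, p i)))) F"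
  proof (intro tendsto_sum tendsto_mult[OF tendsto_const] tendsto_prod)
    fix p i assume "p \<in> {p. p permutes {0..<n}}" "i \<in> {0..<n}"
    then show "((\<lambda>x. A x $$ (i, p i)) \<longlongrightarrow> B $$ (i, p i)) F"
      using lim permutes_in_image by fastforce
  qed
  moreover have "dim_row (A x) = n" "dim_col (A x) = n" for x using A[of x] by simp_all
  ultimately show ?thesis
    using B by (simp add: det_def)
qed

lemma sum_skip_index:
  fixes f :: "nat \<Rightarrow> 'a :: comm_monoid_add"
  assumes "i < Suc n"
  shows "(\<Sum>t<n. f (if t < i then t else Suc t)) = (\<Sum>m \<in> {..<Suc n} - {i}. f m)"
  by (rule sum.reindex_bij_witness[where i = "\<lambda>m. if m < i then m else m - 1"
        and j = "\<lambda>t. if t < i then t else Suc t"]) (use assms in auto)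

lemma matrix_factors_through_kernel:
  fixes M :: "nat \<Rightarrow> nat \<Rightarrow> 'a :: field"
  assumes ker: "\<And>s. s < p \<Longrightarrow> (\<Sum>m<Suc n. M s m * x m) = 0" and "x i \<noteq> 0" and "i < Suc n"
  shows "\<exists>P Q. \<forall>s<p. \<forall>m<Suc n. M s m = (\<Sum>t<n. P s t * Q t m)"
proof -
  define skip where "skip t = (if t < i then t else Suc t)" for t
  define q where "q m' m = (if m = m' then 1 else if m = i then - x m' / x i else 0)" for m' m
  have "M s m = (\<Sum>t<n. M s (skip t) * q (skip t) m)" if "s < p" "m < Suc n" for s m
  proof -
    have "(\<Sum>t<n. M s (skip t) * q (skip t) m) = (\<Sum>m' \<in> {..<Suc n} - {i}. M s m' * q m' m)"
      unfolding skip_def by (rule sum_skip_index[OF \<open>i < Suc n\<close>])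
    also have "\<dots> = M s m"
    proof (cases "m = i")
      case True
      have "(\<Sum>m' \<in> {..<Suc n} - {i}. M s m' * x m') = - (M s i * x i)"
        using ker[OF \<open>s < p\<close>] \<open>i < Suc n\<close> by (simp add: sum_diff1 algebra_simps)
      then have "(\<Sum>m' \<in> {..<Suc n} - {i}. M s m' * q m' m) = M s i * x i / x i"
        using True by (simp add: q_def sum_divide_distrib[symmetric] sum_negf)
      then show ?thesis
        using True \<open>x i \<noteq> 0\<close> by simp
    next
      case False
      then show ?thesis
        using \<open>m < Suc n\<close> by (simp add: q_def if_distrib[of "(*) _"] sum.delta cong: if_cong)
    qed
    finally show ?thesis ..
  qed
  then show ?thesis
    by (intro exI[of _ "\<lambda>s t. M s (skip t)"] exI[of _ "\<lambda>t. q (skip t)"] allI impI)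
qed

lemma sum_lessThan_2: "(\<Sum>t<2. f t) = f 0 + f (1::nat)"
  by (simp add: numeral_2_eq_2)

lemma sum_lessThan_3: "(\<Sum>l<3. f l) = f 0 + f 1 + f (2::nat)"
  by (simp add: eval_nat_numeral)

lemma sum_lessThan_double: "(\<Sum>u<2 * r. g (u::nat)) = (\<Sum>l<r. g (2 * l) + g (2 * l + 1))"
  by (induction r) (simp_all add: algebra_simps)

text \<open>\<open>wedge_coeff s m m'\<close> is the coefficient of the \<open>s\<close>-th basis vector
  \<open>e\<^sub>0 \<and> e\<^sub>1, e\<^sub>0 \<and> e\<^sub>2, e\<^sub>1 \<and> e\<^sub>2\<close> of \<open>\<Lambda>\<^sup>2 \<complex>\<^sup>3\<close> in \<open>e\<^sub>m \<and> e\<^sub>m\<^sub>'\<close>, so that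
  \<open>wedge_mat x\<close> is the matrix of \<open>v \<mapsto> v \<and> x\<close>.\<close>

definition wedge_coeff :: "nat \<Rightarrow> nat \<Rightarrow> nat \<Rightarrow> complex" where
  "wedge_coeff s m m' = (if (m, m') = [(0, 1), (0, 2), (1, 2)] ! s then 1
     else if (m', m) = [(0, 1), (0, 2), (1, 2)] ! s then -1 else 0)"

definition wedge_mat :: "(nat \<Rightarrow> complex) \<Rightarrow> nat \<Rightarrow> nat \<Rightarrow> complex" where
  "wedge_mat x s m = (\<Sum>m'<3. wedge_coeff s m m' * x m')"

lemma wedge_mat_self:
  assumes "s < 3"
  shows "(\<Sum>m<3. wedge_mat x s m * x m) = 0"
proof -
  have "s = 0 \<or> s = 1 \<or> s = 2" using assms by auto
  then show ?thesis
    unfolding wedge_mat_def wedge_coeff_def sum_lessThan_3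
    by (elim disjE) (simp_all add: algebra_simps)
qed

lemma wedge_mat_factors: "\<exists>P Q. \<forall>s<3. \<forall>m<3. wedge_mat x s m = (\<Sum>t::nat<2. P s t * Q t m)"
proof (cases "\<exists>i<3. x i \<noteq> 0")
  case True
  then obtain i where "i < Suc 2" "x i \<noteq> 0" by auto
  from matrix_factors_through_kernel[where M = "wedge_mat x" and x = x and p = 3 and n = 2,
      OF _ this(2,1)] wedge_mat_self
  show ?thesis by simp
next
  case False
  then have "wedge_mat x s m = 0" for s m
    by (simp add: wedge_mat_def)
  then show ?thesis by (intro exI[of _ "\<lambda>_ _. 0"]) simp
qed

text \<open>The Koszul flattening \<open>B\<^sup>* \<otimes> \<complex>\<^sup>3 \<rightarrow> C \<otimes> \<Lambda>\<^sup>2 \<complex>\<^sup>3\<close> of a tensor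
  restricted to the coordinates \<open>\<phi> 0, \<phi> 1, \<phi> 2\<close> of its first factor: the row \<open>n * s + k\<close>
  stands for \<open>c\<^sub>k \<otimes> (e \<and> e)\<^sub>s\<close>, the column \<open>n * m + j\<close> for \<open>\<beta>\<^sub>j \<otimes> e\<^sub>m\<close>, where \<open>\<beta>\<close> is the
  dual basis of \<open>B\<close>.\<close>

definition koszul_flattening ::
    "nat \<Rightarrow> (nat \<Rightarrow> nat) \<Rightarrow> (nat \<Rightarrow> nat \<Rightarrow> nat \<Rightarrow> complex) \<Rightarrow> complex mat" where
  "koszul_flattening n \<phi> X = mat (3 * n) (3 * n)
     (\<lambda>(R, C). \<Sum>m'<3. wedge_coeff (R div n) (C div n) m' * X (\<phi> m') (C mod n) (R mod n))"

text \<open>The \<open>l\<close>-th rank-one summand contributes \<open>(c\<^sub>l b\<^sub>l\<^sup>T) \<otimes> wedge_mat (a\<^sub>l \<circ> \<phi>)\<close>, and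
  \<open>wedge_mat (a\<^sub>l \<circ> \<phi>) = P\<^sub>l Q\<^sub>l\<close> with inner dimension 2; stacking these factors gives
  \<open>U\<close> and \<open>V\<close> with inner dimension \<open>2 r\<close>.\<close>

lemma det_koszul_flattening_eq_0:
  assumes "tensor_rank_le n X r" and "2 * r < 3 * n" and \<phi>: "\<And>m. m < 3 \<Longrightarrow> \<phi> m < n"
  shows "det (koszul_flattening n \<phi> X) = 0"
proof -
  obtain a b c :: "nat \<Rightarrow> nat \<Rightarrow> complex"
    where X: "\<And>i j k. i < n \<Longrightarrow> j < n \<Longrightarrow> k < n \<Longrightarrow> X i j k = (\<Sum>l<r. a l i * b l j * c l k)"
    using assms(1) unfolding tensor_rank_le_def by blast
  have "\<forall>l. \<exists>P Q. \<forall>s<3. \<forall>m<3. wedge_mat (\<lambda>m'. a l (\<phi> m')) s m = (\<Sum>t::nat<2. P s t * Q t m)"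
    using wedge_mat_factors by blast
  then obtain P Q :: "nat \<Rightarrow> nat \<Rightarrow> nat \<Rightarrow> complex" where PQ: "\<And>l s m. s < 3 \<Longrightarrow> m < 3 \<Longrightarrow>
      wedge_mat (\<lambda>m'. a l (\<phi> m')) s m = (\<Sum>t::nat<2. P l s t * Q l t m)"
    by metis
  define U where "U = mat (3 * n) (2 * r)
    (\<lambda>(R, u). P (u div 2) (R div n) (u mod 2) * c (u div 2) (R mod n))"
  define V where "V = mat (2 * r) (3 * n)
    (\<lambda>(u, C). Q (u div 2) (u mod 2) (C div n) * b (u div 2) (C mod n))"
  have "koszul_flattening n \<phi> X = U * V"
  proof (rule eq_matI)
    fix R C assume "R < dim_row (U * V)" "C < dim_col (U * V)"
    then have R: "R < 3 * n" and C: "C < 3 * n"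
      by (simp_all add: U_def V_def)
    then have s: "R div n < 3" "C div n < 3" and k: "R mod n < n" "C mod n < n"
      by (auto simp: less_mult_imp_div_less mult.commute)
    have "(U * V) $$ (R, C) = (\<Sum>u<2 * r. U $$ (R, u) * V $$ (u, C))"
      using R C by (simp add: U_def V_def scalar_prod_def atLeast0LessThan)
    also have "\<dots> = (\<Sum>l<r. U $$ (R, 2 * l) * V $$ (2 * l, C) + U $$ (R, 2 * l + 1) * V $$ (2 * l + 1, C))"
      by (rule sum_lessThan_double)
    also have "\<dots> = (\<Sum>l<r. (\<Sum>t<2. P l (R div n) t * Q l t (C div n)) * b l (C mod n) * c l (R mod n))"
    proof (rule sum.cong[OF refl])
      fix l assume "l \<in> {..<r}"
      then show "U $$ (R, 2 * l) * V $$ (2 * l, C) + U $$ (R, 2 * l + 1) * V $$ (2 * l + 1, C)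
          = (\<Sum>t<2. P l (R div n) t * Q l t (C div n)) * b l (C mod n) * c l (R mod n)"
        using R C by (simp add: U_def V_def sum_lessThan_2) (simp add: algebra_simps)
    qed
    also have "\<dots> = (\<Sum>l<r. wedge_mat (\<lambda>m'. a l (\<phi> m')) (R div n) (C div n) * b l (C mod n) * c l (R mod n))"
      using PQ[OF s] by simp
    also have "\<dots> = (\<Sum>m'<3. wedge_coeff (R div n) (C div n) m'
        * (\<Sum>l<r. a l (\<phi> m') * b l (C mod n) * c l (R mod n)))"
      by (simp add: wedge_mat_def sum_distrib_left sum_distrib_right sum.swap[of _ "{..<r}"] algebra_simps)
    also have "\<dots> = koszul_flattening n \<phi> X $$ (R, C)"
      using R C \<phi> k by (simp add: koszul_flattening_def X)
    finally show "koszul_flattening n \<phi> X $$ (R, C) = (U * V) $$ (R, C)" ..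
  qed (simp_all add: koszul_flattening_def U_def V_def)
  moreover have "U \<in> carrier_mat (3 * n) (2 * r)" "V \<in> carrier_mat (2 * r) (3 * n)"
    by (simp_all add: U_def V_def)
  ultimately show ?thesis
    using det_mult_eq_0_if_inner_dim_less \<open>2 * r < 3 * n\<close> by metis
qed

lemma tendsto_det_koszul_flattening:
  assumes lim: "\<And>i j k. i < n \<Longrightarrow> j < n \<Longrightarrow> k < n \<Longrightarrow> ((\<lambda>x. Xs x i j k) \<longlongrightarrow> X i j k) F"
    and \<phi>: "\<And>m. m < 3 \<Longrightarrow> \<phi> m < n"
  shows "((\<lambda>x. det (koszul_flattening n \<phi> (Xs x))) \<longlongrightarrow> det (koszul_flattening n \<phi> X)) F"
proof (rule tendsto_det[of _ "3 * n"])
  fix R C assume "R < 3 * n" "C < 3 * n"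
  then have "R mod n < n" "C mod n < n"
    by (auto simp: mult.commute)
  then show "((\<lambda>x. koszul_flattening n \<phi> (Xs x) $$ (R, C)) \<longlongrightarrow> koszul_flattening n \<phi> X $$ (R, C)) F"
    using \<open>R < 3 * n\<close> \<open>C < 3 * n\<close> \<phi>
    by (auto simp: koszul_flattening_def intro!: tendsto_sum tendsto_mult[OF tendsto_const] lim)
qed (simp_all add: koszul_flattening_def)

lemma koszul_flattening_border_rank_bound:
  assumes "border_rank_le n T r" and \<phi>: "\<And>m. m < 3 \<Longrightarrow> \<phi> m < n"
    and "det (koszul_flattening n \<phi> T) \<noteq> 0"
  shows "3 * n \<le> 2 * r"
proof (rule ccontr)
  assume "\<not> 3 * n \<le> 2 * r"
  obtain Te :: "real \<Rightarrow> nat \<Rightarrow> nat \<Rightarrow> nat \<Rightarrow> complex" where rank: "\<And>e. tensor_rank_le n (Te e) r"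
    and lim: "\<And>i j k. i < n \<Longrightarrow> j < n \<Longrightarrow> k < n \<Longrightarrow> ((\<lambda>e. Te e i j k) \<longlongrightarrow> T i j k) (at 0)"
    using assms(1) unfolding border_rank_le_def by blast
  have "((\<lambda>e. det (koszul_flattening n \<phi> (Te e))) \<longlongrightarrow> det (koszul_flattening n \<phi> T)) (at 0)"
    using lim \<phi> by (rule tendsto_det_koszul_flattening)
  moreover have "det (koszul_flattening n \<phi> (Te e)) = 0" for e
    using rank \<phi> \<open>\<not> 3 * n \<le> 2 * r\<close> by (intro det_koszul_flattening_eq_0) auto
  ultimately have "det (koszul_flattening n \<phi> T) = 0"
    using LIM_const_eq by fastforce
  with assms(3) show False ..
qed

lemma less_4_iff: "(i::nat) < 4 \<longleftrightarrow> i \<in> {0,1,2,3}"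
  by (simp add: eval_nat_numeral less_Suc_eq)

lemma less_6_iff: "(i::nat) < 6 \<longleftrightarrow> i \<in> {0,1,2,3,4,5}"
  by (simp add: eval_nat_numeral less_Suc_eq)

lemma less_18_iff: "(i::nat) < 18 \<longleftrightarrow> i \<in> {0,1,2,3,4,5,6,7,8,9,10,11,12,13,14,15,16,17}"
  by (simp add: eval_nat_numeral less_Suc_eq)

lemma sum_lessThan_4: "(\<Sum>l<4. f l) = f 0 + f 1 + f 2 + f (3::nat)"
  by (simp add: eval_nat_numeral add.commute add.left_commute)

lemma sum_lessThan_6: "(\<Sum>l<6. f l) = f 0 + f 1 + f 2 + f 3 + f 4 + f (5::nat)"
  by (simp add: eval_nat_numeral add.commute add.left_commute)

lemma sum_lessThan_18: "(\<Sum>l<18. f l) = f 0 + f 1 + f 2 + f 3 + f 4 + f 5 + f 6 + f 7 + f 8 + f 9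
   + f 10 + f 11 + f 12 + f 13 + f 14 + f 15 + f 16 + f (17::nat)"
  by (simp add: eval_nat_numeral add.commute add.left_commute)

lemma so4_basis_skew: "k < 6 \<Longrightarrow> so4_basis k q p = - so4_basis k p q"
  unfolding so4_basis_def so4_pair_def less_6_iff by auto

lemma mat4_bracket_skew:
  assumes "\<And>p q. M q p = - M p q" and "\<And>p q. N q p = - N p q"
  shows "mat4_bracket M N q p = - mat4_bracket M N p q"
proof -
  have "M q l * N l p - N q l * M l p = - (M p l * N l q - N p l * M l q)" for l
    using assms(1)[of l q] assms(1)[of p l] assms(2)[of l q] assms(2)[of p l]
    by (simp add: algebra_simps)
  then show ?thesis
    unfolding mat4_bracket_def mat4_mult_def sum_subtractf[symmetric] sum_negf[symmetric] by simp
qed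

lemma so4_pair_less: "k < 6 \<Longrightarrow> fst (so4_pair k) < 4 \<and> snd (so4_pair k) < 4"
  unfolding so4_pair_def less_6_iff by auto

lemma so4_basis_at_pair:
  "k < 6 \<Longrightarrow> k' < 6 \<Longrightarrow> so4_basis k' (fst (so4_pair k)) (snd (so4_pair k)) = (if k' = k then 1 else 0)"
  unfolding so4_basis_def so4_pair_def less_6_iff by auto

lemma skew_eq_sum_so4_basis:
  fixes F :: "nat \<Rightarrow> nat \<Rightarrow> complex"
  assumes skew: "\<And>p q. p < 4 \<Longrightarrow> q < 4 \<Longrightarrow> F q p = - F p q" and "p < 4" "q < 4"
  shows "F p q = (\<Sum>k<6. F (fst (so4_pair k)) (snd (so4_pair k)) * so4_basis k p q)"
proof -
  have diag: "F p p = 0" if "p < 4" for p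
    using skew[OF that that] by simp
  have "F 1 0 = - F 0 1" "F 2 0 = - F 0 2" "F 3 0 = - F 0 3"
    "F 2 1 = - F 1 2" "F 3 1 = - F 1 3" "F 3 2 = - F 2 3"
    by (rule skew; simp)+
  note skew_values = this
  have "p \<in> {0,1,2,3}" "q \<in> {0,1,2,3}"
    using \<open>p < 4\<close> \<open>q < 4\<close> unfolding less_4_iff .
  then show ?thesis
    unfolding sum_lessThan_6 so4_basis_def so4_pair_def
    by (simp only: insert_iff empty_iff simp_thms; elim disjE; simp add: diag skew_values skew_values[unfolded One_nat_def])
qed

lemma so4_coords_unique:
  assumes "\<And>p q. p < 4 \<Longrightarrow> q < 4 \<Longrightarrow> F p q = (\<Sum>k'<6. c k' * so4_basis k' p q)" and "k < 6"
  shows "c k = F (fst (so4_pair k)) (snd (so4_pair k))"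
proof -
  have "F (fst (so4_pair k)) (snd (so4_pair k)) = (\<Sum>k'<6. c k' * (if k' = k then 1 else 0))"
    using assms so4_pair_less[OF \<open>k < 6\<close>] by (simp add: so4_basis_at_pair)
  also have "\<dots> = c k"
    using \<open>k < 6\<close> by (simp add: if_distrib[of "(*) _"] cong: if_cong)
  finally show ?thesis ..
qed

lemma T_so4_bracket:
  assumes "i < 6" "j < 6" "k < 6"
  shows "T_so4 i j k = mat4_bracket (so4_basis i) (so4_basis j) (fst (so4_pair k)) (snd (so4_pair k))"
proof -
  let ?B = "mat4_bracket (so4_basis i) (so4_basis j)"
  let ?c = "\<lambda>k. if k < 6 then ?B (fst (so4_pair k)) (snd (so4_pair k)) else 0"
  have skew: "?B q p = - ?B p q" for p q
    using assms by (intro mat4_bracket_skew so4_basis_skew)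
  have expand: "?B p q = (\<Sum>k<6. ?c k * so4_basis k p q)" if "p < 4" "q < 4" for p q
    using skew_eq_sum_so4_basis[of ?B p q, OF skew that] by simp
  have "so4_struct_const i j = ?c"
    unfolding so4_struct_const_def
  proof (rule the_equality)
    fix c assume "(\<forall>k\<ge>6. c k = 0) \<and> (\<forall>p<4. \<forall>q<4. ?B p q = (\<Sum>k<6. c k * so4_basis k p q))"
    then show "c = ?c"
      using so4_coords_unique[of ?B c] by (auto simp: not_less)
  qed (use expand in simp)
  then show ?thesis
    using assms by (simp add: T_so4_def)
qed

lemma T_so4_slices:
  assumes "j < 6" "k < 6"
  shows "T_so4 3 j k =
      [[ 0, -1,  0,  0,  0,  0],
       [ 1,  0,  0,  0,  0,  0],
       [ 0,  0,  0,  0,  0,  0],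
       [ 0,  0,  0,  0,  0,  0],
       [ 0,  0,  0,  0,  0, -1],
       [ 0,  0,  0,  0,  1,  0]] ! j ! k"
    and "T_so4 4 j k =
      [[ 0,  0, -1,  0,  0,  0],
       [ 0,  0,  0,  0,  0,  0],
       [ 1,  0,  0,  0,  0,  0],
       [ 0,  0,  0,  0,  0,  1],
       [ 0,  0,  0,  0,  0,  0],
       [ 0,  0,  0, -1,  0,  0]] ! j ! k"
    and "T_so4 5 j k =
      [[ 0,  0,  0,  0,  0,  0],
       [ 0,  0, -1,  0,  0,  0],
       [ 0,  1,  0,  0,  0,  0],
       [ 0,  0,  0,  0, -1,  0],
       [ 0,  0,  0,  1,  0,  0],
       [ 0,  0,  0,  0,  0,  0]] ! j ! k"
  using assms unfolding less_6_iff
  by (simp_all only: insert_iff empty_iff simp_thms; elim disjE;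
      simp add: T_so4_bracket mat4_bracket_def mat4_mult_def so4_basis_def so4_pair_def sum_lessThan_4)+

definition K_so4 :: "complex mat" where
  "K_so4 = mat_of_rows_list 18 [
    [ 0,  0,  1,  0,  0,  0,  0,  0,  0,  0,  0,  0,  0,  0,  0,  0,  0,  0],
    [ 0,  0,  0,  0,  0,  0,  0,  0, -1,  0,  0,  0,  0,  0,  0,  0,  0,  0],
    [-1,  0,  0,  0,  0,  0,  0,  1,  0,  0,  0,  0,  0,  0,  0,  0,  0,  0],
    [ 0,  0,  0,  0,  0, -1,  0,  0,  0,  0, -1,  0,  0,  0,  0,  0,  0,  0],
    [ 0,  0,  0,  0,  0,  0,  0,  0,  0,  1,  0,  0,  0,  0,  0,  0,  0,  0],
    [ 0,  0,  0,  1,  0,  0,  0,  0,  0,  0,  0,  0,  0,  0,  0,  0,  0,  0],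
    [ 0,  1,  0,  0,  0,  0,  0,  0,  0,  0,  0,  0,  0,  0,  0,  0,  0,  0],
    [-1,  0,  0,  0,  0,  0,  0,  0,  0,  0,  0,  0,  0,  0, -1,  0,  0,  0],
    [ 0,  0,  0,  0,  0,  0,  0,  0,  0,  0,  0,  0,  0,  1,  0,  0,  0,  0],
    [ 0,  0,  0,  0,  0,  0,  0,  0,  0,  0,  0,  0,  0,  0,  0,  0, -1,  0],
    [ 0,  0,  0,  0,  0,  1,  0,  0,  0,  0,  0,  0,  0,  0,  0,  1,  0,  0],
    [ 0,  0,  0,  0, -1,  0,  0,  0,  0,  0,  0,  0,  0,  0,  0,  0,  0,  0],
    [ 0,  0,  0,  0,  0,  0,  0,  1,  0,  0,  0,  0,  0,  0, -1,  0,  0,  0],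
    [ 0,  0,  0,  0,  0,  0, -1,  0,  0,  0,  0,  0,  0,  0,  0,  0,  0,  0],
    [ 0,  0,  0,  0,  0,  0,  0,  0,  0,  0,  0,  0,  1,  0,  0,  0,  0,  0],
    [ 0,  0,  0,  0,  0,  0,  0,  0,  0,  0,  0,  0,  0,  0,  0,  0,  0,  1],
    [ 0,  0,  0,  0,  0,  0,  0,  0,  0,  0,  0,  1,  0,  0,  0,  0,  0,  0],
    [ 0,  0,  0,  0,  0,  0,  0,  0,  0,  0, -1,  0,  0,  0,  0, -1,  0,  0]]"

lemma K_so4_carrier: "K_so4 \<in> carrier_mat 18 18"
  by (rule carrier_matI) (simp_all add: K_so4_def mat_of_rows_list_def)

lemma koszul_flattening_T_so4: "koszul_flattening 6 (\<lambda>m. 5 - m) T_so4 = K_so4"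
proof (rule eq_matI)
  have dims: "dim_row K_so4 = 18" "dim_col K_so4 = 18"
    using K_so4_carrier by auto
  fix R C assume "R < dim_row K_so4" "C < dim_col K_so4"
  then have "R \<in> {0,1,2,3,4,5,6,7,8,9,10,11,12,13,14,15,16,17}" "C \<in> {0,1,2,3,4,5,6,7,8,9,10,11,12,13,14,15,16,17}"
    unfolding dims less_18_iff .
  then show "koszul_flattening 6 (\<lambda>m. 5 - m) T_so4 $$ (R, C) = K_so4 $$ (R, C)"
    by (simp only: insert_iff empty_iff simp_thms; elim disjE;
        simp add: koszul_flattening_def K_so4_def mat_of_rows_list_def sum_lessThan_3 T_so4_slices wedge_coeff_def)
qed (simp_all add: koszul_flattening_def K_so4_def mat_of_rows_list_def)

text \<open>Every row of \<open>K_so4\<close> has at most two nonzero entries; the resulting equations kill all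
  coordinates of a kernel vector directly, except on \<open>{0, 7, 14}\<close> and \<open>{5, 10, 15}\<close>, where
  they force \<open>v\<^sub>0 = - v\<^sub>0\<close> and \<open>v\<^sub>5 = - v\<^sub>5\<close>.\<close>

lemma K_so4_kernel_trivial:
  assumes v: "v \<in> carrier_vec 18" and Kv: "K_so4 *\<^sub>v v = 0\<^sub>v 18"
  shows "v = 0\<^sub>v 18"
proof -
  have row: "(\<Sum>C<18. K_so4 $$ (R, C) * v $ C) = 0" if "R < 18" for R
  proof -
    have "(K_so4 *\<^sub>v v) $ R = 0" using Kv that by simp
    then show ?thesis using v that
      by (simp add: K_so4_def mat_of_rows_list_def scalar_prod_def atLeast0LessThan)
  qed
  note rows = row[of 0] row[of 1] row[of 2] row[of 3] row[of 4] row[of 5] row[of 6] row[of 7] row[of 8]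
    row[of 9] row[of 10] row[of 11] row[of 12] row[of 13] row[of 14] row[of 15] row[of 16] row[of 17]
  note eqs = rows[simplified K_so4_def mat_of_rows_list_def sum_lessThan_18, simplified]
  have "v $ 0 = - v $ 0" "v $ 5 = - v $ 5"
    using eqs by (metis minus_minus eq_neg_iff_add_eq_0)+
  then have "v $ 0 = 0" "v $ 5 = 0"
    by simp_all
  moreover have "dim_vec v = 18"
    using v by simp
  ultimately show ?thesis
    using eqs by (intro eq_vecI) (auto simp: less_18_iff)
qed

lemma det_K_so4_nonzero: "det K_so4 \<noteq> 0"
proof
  assume "det K_so4 = 0"
  then obtain v where "v \<in> carrier_vec 18" "v \<noteq> 0\<^sub>v 18" "K_so4 *\<^sub>v v = 0\<^sub>v 18"
    using det_0_iff_vec_prod_zero_field[OF K_so4_carrier] by blast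
  with K_so4_kernel_trivial show False by blast
qed

theorem theorem4:
  shows "border_rank 6 T_so4 \<ge> 9"
proof -
  have "3 * 6 \<le> 2 * border_rank 6 T_so4"
    by (rule koszul_flattening_border_rank_bound[OF border_rank_le_border_rank, where \<phi> = "\<lambda>m. 5 - m"])
      (simp_all add: koszul_flattening_T_so4 det_K_so4_nonzero)
  then show ?thesis by simp
qed

end
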